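(* Let $K\subset\mathbb{C}$ be a totally imaginary quartic number field with ring of integers $\mathcal{O}_K$, such that $K_0=K\cap\mathbb{R}$ is a real quadratic field. Let $\sigma:K\to\mathbb{C}$ be a field embedding whose restriction to $K_0$ is the non-trivial automorphism of $K_0$. Let $\mathcal{B}\subseteq\mathbb{C}$ be a bounded set containing $0$ as an interior point, and let $$\mathcal{S}_{\mathcal B}=\{z\in\mathcal{O}_K : \sigma(z)\in\mathcal{B}\}.$$ If $z_1,z_2\in\mathcal{S}_{\mathcal B}$ with $z_1\neq z_2$, then $$|z_1-z_2|\ge\frac{1}{2\operatorname{diam}(\mathcal{B})}.$$
   Context: Elements of $K$ are regarded as complex numbers via the inclusion $K\subset\mathbb{C}$; $\operatorname{diam}(\mathcal B)=\sup\{|a-b|:a,b\in\mathcal B\}$. *)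

theory Defs
  imports "HOL-Analysis.Analysis" "HOL-Computational_Algebra.Polynomial"
begin

definition complex_subfield :: "complex set \<Rightarrow> bool" where
  "complex_subfield K \<longleftrightarrow> 0 \<in> K \<and> 1 \<in> K \<and>
     (\<forall>x\<in>K. \<forall>y\<in>K. x + y \<in> K \<and> x * y \<in> K) \<and>
     (\<forall>x\<in>K. - x \<in> K) \<and> (\<forall>x\<in>K. x \<noteq> 0 \<longrightarrow> inverse x \<in> K)"

definition rat_span :: "complex list \<Rightarrow> complex set" where
  "rat_span bs = {(\<Sum>i<length bs. of_rat (c i) * bs ! i) | c. True}"

definition rat_indep :: "complex list \<Rightarrow> bool" where
  "rat_indep bs \<longleftrightarrow> (\<forall>c. (\<Sum>i<length bs. of_rat (c i) * bs ! i) = 0 \<longrightarrow> (\<forall>i<length bs. c i = 0))"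

definition number_field_of_degree :: "complex set \<Rightarrow> nat \<Rightarrow> bool" where
  "number_field_of_degree K n \<longleftrightarrow> complex_subfield K \<and>
     (\<exists>bs. length bs = n \<and> rat_indep bs \<and> rat_span bs = K)"

definition field_embedding :: "complex set \<Rightarrow> (complex \<Rightarrow> complex) \<Rightarrow> bool" where
  "field_embedding K \<sigma> \<longleftrightarrow> \<sigma> 1 = 1 \<and>
     (\<forall>x\<in>K. \<forall>y\<in>K. \<sigma> (x + y) = \<sigma> x + \<sigma> y \<and> \<sigma> (x * y) = \<sigma> x * \<sigma> y)"

definition totally_imaginary :: "complex set \<Rightarrow> bool" where
  "totally_imaginary K \<longleftrightarrow> (\<forall>\<tau>. field_embedding K \<tau> \<longrightarrow> (\<exists>x\<in>K. \<tau> x \<notin> \<real>))"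

definition algebraic_integer :: "complex \<Rightarrow> bool" where
  "algebraic_integer x \<longleftrightarrow> (\<exists>p :: int poly. lead_coeff p = 1 \<and> poly (map_poly of_int p) x = 0)"

definition ring_of_integers :: "complex set \<Rightarrow> complex set" where
  "ring_of_integers K = {z \<in> K. algebraic_integer z}"

end

theory Submission
  imports Defs "Jordan_Normal_Form.Char_Poly"
begin

text \<open>Put \<open>z = z\<^sub>1 - z\<^sub>2\<close>, a nonzero algebraic integer of \<open>K\<close>. Writing
  \<open>K = K\<^sub>0 + K\<^sub>0 \<phi>\<close> with \<open>\<phi>\<close> purely imaginary shows that complex conjugation is an
  automorphism of \<open>K\<close> commuting with \<open>\<sigma>\<close>; hence \<open>|z|\<^sup>2 |\<sigma> z|\<^sup>2 = (z z\<^sup>*) \<sigma>(z z\<^sup>*)\<close> is the norm of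
  \<open>z z\<^sup>* \<in> K\<^sub>0\<close> down to \<open>\<rat>\<close>. Being a nonzero rational algebraic integer, it is at least 1, so
  \<open>|z| \<ge> 1 / |\<sigma> z\<^sub>1 - \<sigma> z\<^sub>2| \<ge> 1 / diam B\<close>.\<close>

section \<open>Algebraic integers\<close>

lemma algebraic_integer_iff_algebraic_int: "algebraic_integer x \<longleftrightarrow> algebraic_int x"
  unfolding algebraic_integer_def algebraic_int_altdef_ipoly by blast

definition int_span :: "'i set \<Rightarrow> ('i \<Rightarrow> 'a :: comm_ring_1) \<Rightarrow> 'a set" where
  "int_span I s = {\<Sum>i\<in>I. of_int (c i) * s i | c. True}"

lemma int_span_I: "u = (\<Sum>i\<in>I. of_int (c i) * s i) \<Longrightarrow> u \<in> int_span I s"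
  unfolding int_span_def by blast

lemma int_span_sum:
  assumes "finite F" "\<And>j. j \<in> F \<Longrightarrow> u j \<in> int_span I s"
  shows "(\<Sum>j\<in>F. of_int (e j) * u j) \<in> int_span I s"
  using assms
proof (induction F rule: finite_induct)
  case empty
  show ?case by (rule int_span_I[where c = "\<lambda>_. 0"]) simp
next
  case (insert a F)
  obtain c d where "u a = (\<Sum>i\<in>I. of_int (c i) * s i)"
    and "(\<Sum>j\<in>F. of_int (e j) * u j) = (\<Sum>i\<in>I. of_int (d i) * s i)"
    using insert unfolding int_span_def by blast
  then have "(\<Sum>j\<in>insert a F. of_int (e j) * u j) = (\<Sum>i\<in>I. of_int (e a * c i + d i) * s i)"
    using insert.hyps by (simp add: sum.distrib sum_distrib_left algebra_simps)
  then show ?case by (rule int_span_I)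
qed

lemma int_span_diff:
  assumes "u \<in> int_span I s" "v \<in> int_span I s"
  shows "u - v \<in> int_span I s"
proof -
  obtain c d where "u = (\<Sum>i\<in>I. of_int (c i) * s i)" "v = (\<Sum>i\<in>I. of_int (d i) * s i)"
    using assms unfolding int_span_def by blast
  then have "u - v = (\<Sum>i\<in>I. of_int (c i - d i) * s i)"
    by (simp add: sum_subtractf left_diff_distrib)
  then show ?thesis by (rule int_span_I)
qed

lemma int_span_generator:
  assumes "finite I" "i \<in> I"
  shows "s i \<in> int_span I s"
proof -
  have "(\<Sum>j\<in>I. of_int (if j = i then 1 else 0) * s j) = (\<Sum>j\<in>I. if j = i then s j else 0)"
    by (rule sum.cong) auto
  also have "\<dots> = s i" using assms by simp
  finally show ?thesis by (intro int_span_I) (rule sym)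
qed

lemma algebraic_int_eigenvalue_of_int_mat:
  fixes A :: "int mat" and x :: "'a :: field_char_0"
  assumes A: "A \<in> carrier_mat n n" and x: "eigenvalue (map_mat of_int A) x"
  shows "algebraic_int x"
proof -
  have "map_mat of_int A \<in> carrier_mat n n" using A by simp
  then have "poly (char_poly (map_mat of_int A)) x = 0"
    using eigenvalue_root_char_poly x by blast
  moreover have "char_poly (map_mat of_int A) = map_poly of_int (char_poly A)"
    by (rule of_int_hom.char_poly_hom[OF A])
  moreover have "lead_coeff (char_poly A) = 1"
    using degree_monic_char_poly[OF A] by simp
  ultimately show ?thesis
    unfolding algebraic_int_altdef_ipoly by metis
qed

text \<open>Multiplication by \<open>x\<close> on the span is given by an integer matrix with eigenvector
  \<open>(s i)\<^sub>i\<close>.\<close>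

lemma algebraic_int_if_mult_int_span:
  fixes s :: "'i \<Rightarrow> 'a :: field_char_0"
  assumes "finite I" "i0 \<in> I" "s i0 \<noteq> 0"
    and mult: "\<And>i. i \<in> I \<Longrightarrow> x * s i \<in> int_span I s"
  shows "algebraic_int x"
proof -
  define n where "n = card I"
  obtain f where f: "bij_betw f {..<n} I"
    using ex_bij_betw_nat_finite[OF \<open>finite I\<close>] unfolding n_def atLeast0LessThan by blast
  have "\<forall>i\<in>I. \<exists>c. x * s i = (\<Sum>j\<in>I. of_int (c j) * s j)"
    using mult unfolding int_span_def by blast
  then obtain C where C: "\<And>i. i \<in> I \<Longrightarrow> x * s i = (\<Sum>j\<in>I. of_int (C i j) * s j)"
    by metis
  define A :: "int mat" where "A = mat n n (\<lambda>(k, l). C (f k) (f l))"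
  define v where "v = vec n (\<lambda>k. s (f k))"
  have A: "A \<in> carrier_mat n n" by (simp add: A_def)
  have eigen: "map_mat of_int A *\<^sub>v v = x \<cdot>\<^sub>v v"
  proof (rule eq_vecI)
    fix k assume "k < dim_vec (x \<cdot>\<^sub>v v)"
    then have k: "k < n" by (simp add: v_def)
    then have "f k \<in> I" using f by (auto simp: bij_betw_def)
    have "(map_mat of_int A *\<^sub>v v) $ k = (\<Sum>l<n. of_int (C (f k) (f l)) * s (f l))"
      using k by (simp add: A_def v_def mult_mat_vec_def scalar_prod_def atLeast0LessThan)
    also have "\<dots> = (\<Sum>j\<in>I. of_int (C (f k) j) * s j)"
      by (rule sum.reindex_bij_betw[OF f])
    also have "\<dots> = (x \<cdot>\<^sub>v v) $ k"
      using C[OF \<open>f k \<in> I\<close>] k by (simp add: v_def)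
    finally show "(map_mat of_int A *\<^sub>v v) $ k = (x \<cdot>\<^sub>v v) $ k" .
  qed (simp add: A_def v_def)
  obtain k0 where "k0 < n" "f k0 = i0"
    using f \<open>i0 \<in> I\<close> by (auto simp: bij_betw_def)
  then have "v \<noteq> 0\<^sub>v n"
    using \<open>s i0 \<noteq> 0\<close> by (metis index_vec index_zero_vec(1) v_def)
  then have "eigenvector (map_mat of_int A) v x"
    using eigen A by (simp add: eigenvector_def v_def)
  then show ?thesis
    using algebraic_int_eigenvalue_of_int_mat[OF A] unfolding eigenvalue_def by blast
qed

lemma power_in_int_span_of_root:
  fixes p :: "int poly" and z :: "'a :: field_char_0"
  assumes "lead_coeff p = 1" "poly (map_poly of_int p) z = 0"
  shows "z ^ m \<in> int_span {..<degree p} (\<lambda>i. z ^ i)"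
proof (induction m rule: less_induct)
  case (less m)
  define d where "d = degree p"
  show ?case
  proof (cases "m < d")
    case True
    then show ?thesis by (intro int_span_generator) (auto simp: d_def)
  next
    case False
    have "0 = (\<Sum>i\<le>d. of_int (coeff p i) * z ^ i)"
      using assms(2) by (simp add: poly_altdef d_def degree_map_poly coeff_map_poly)
    also have "\<dots> = (\<Sum>i<d. of_int (coeff p i) * z ^ i) + z ^ d"
      using assms(1) by (simp add: lessThan_Suc_atMost[symmetric] d_def)
    finally have zd: "z ^ d = (\<Sum>i<d. of_int (- coeff p i) * z ^ i)"
      by (simp add: eq_neg_iff_add_eq_0 add.commute sum_negf)
    have "z ^ m = z ^ (m - d) * z ^ d"
      using False by (simp flip: power_add)
    also have "\<dots> = (\<Sum>i<d. of_int (- coeff p i) * z ^ (m - d + i))"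
      unfolding zd by (simp add: sum_distrib_left power_add mult_ac)
    also have "\<dots> \<in> int_span {..<degree p} (\<lambda>i. z ^ i)"
    proof (rule int_span_sum)
      fix i assume "i \<in> {..<d}"
      then show "z ^ (m - d + i) \<in> int_span {..<degree p} (\<lambda>i. z ^ i)"
        using False by (intro less.IH) auto
    qed simp
    finally show ?thesis .
  qed
qed

text \<open>Both \<open>x - y\<close> and \<open>x y\<close> multiply the span of the monomials \<open>x\<^sup>i y\<^sup>j\<close>
  (\<open>i < deg p\<close>, \<open>j < deg q\<close>) into itself.\<close>

lemma algebraic_int_diff_mult:
  fixes x y :: "'a :: field_char_0"
  assumes "algebraic_int x" "algebraic_int y"
  shows "algebraic_int (x - y)" "algebraic_int (x * y)"
proof -
  obtain p where p: "lead_coeff p = 1" "poly (map_poly of_int p) x = 0"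
    using assms(1) unfolding algebraic_int_altdef_ipoly by blast
  obtain q where q: "lead_coeff q = 1" "poly (map_poly of_int q) y = 0"
    using assms(2) unfolding algebraic_int_altdef_ipoly by blast
  define I where "I = {..<degree p} \<times> {..<degree q}"
  define s where "s = (\<lambda>(i, j). x ^ i * y ^ j)"
  have nonconstant: "degree f \<noteq> 0" if "lead_coeff f = 1" "poly (map_poly of_int f) t = 0"
    for f :: "int poly" and t :: 'a
  proof
    assume "degree f = 0"
    with that show False by (auto elim!: degree_eq_zeroE)
  qed
  have "degree p \<noteq> 0" "degree q \<noteq> 0"
    using nonconstant p q by blast+
  then have I: "finite I" "(0, 0) \<in> I" "s (0, 0) \<noteq> 0"
    by (auto simp: I_def s_def)
  have monomial: "x ^ m * y ^ l \<in> int_span I s" for m l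
  proof -
    obtain c where c: "x ^ m = (\<Sum>i<degree p. of_int (c i) * x ^ i)"
      using power_in_int_span_of_root[OF p, of m] unfolding int_span_def by blast
    obtain e where e: "y ^ l = (\<Sum>j<degree q. of_int (e j) * y ^ j)"
      using power_in_int_span_of_root[OF q, of l] unfolding int_span_def by blast
    have "x ^ m * y ^ l = (\<Sum>i<degree p. \<Sum>j<degree q. of_int (c i * e j) * s (i, j))"
      by (simp add: c e sum_product s_def mult_ac)
    also have "\<dots> = (\<Sum>ij\<in>I. of_int ((\<lambda>(i, j). c i * e j) ij) * s ij)"
      unfolding I_def by (simp add: sum.cartesian_product split_beta)
    finally show ?thesis by (rule int_span_I)
  qed
  have "(x - y) * s ij \<in> int_span I s" for ij
  proof -
    obtain i j where "ij = (i, j)" by fastforce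
    then have "(x - y) * s ij = x ^ Suc i * y ^ j - x ^ i * y ^ Suc j"
      by (simp add: s_def algebra_simps)
    then show ?thesis by (simp only: int_span_diff monomial)
  qed
  then show "algebraic_int (x - y)" using algebraic_int_if_mult_int_span[of I "(0, 0)" s] I by blast
  have "(x * y) * s ij \<in> int_span I s" for ij
  proof -
    obtain i j where "ij = (i, j)" by fastforce
    then have "(x * y) * s ij = x ^ Suc i * y ^ Suc j"
      by (simp add: s_def algebra_simps)
    then show ?thesis by (simp only: monomial)
  qed
  then show "algebraic_int (x * y)" using algebraic_int_if_mult_int_span[of I "(0, 0)" s] I by blast
qed

section \<open>Subfields of \<open>\<complex>\<close> and their embeddings\<close>

locale complex_subfield_embedding =
  fixes K :: "complex set" and \<sigma> :: "complex \<Rightarrow> complex"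
  assumes subfield: "complex_subfield K" and embedding: "field_embedding K \<sigma>"
begin

lemma zero_mem [simp]: "0 \<in> K"
  and one_mem [simp]: "1 \<in> K"
  and add_mem [simp]: "x \<in> K \<Longrightarrow> y \<in> K \<Longrightarrow> x + y \<in> K"
  and mult_mem [simp]: "x \<in> K \<Longrightarrow> y \<in> K \<Longrightarrow> x * y \<in> K"
  and uminus_mem [simp]: "x \<in> K \<Longrightarrow> - x \<in> K"
  and inverse_mem [simp]: "x \<in> K \<Longrightarrow> inverse x \<in> K"
  using subfield inverse_zero unfolding complex_subfield_def by metis+

lemma diff_mem [simp]: "x \<in> K \<Longrightarrow> y \<in> K \<Longrightarrow> x - y \<in> K"
  by (metis add_mem uminus_mem diff_conv_add_uminus)

lemma divide_mem [simp]: "x \<in> K \<Longrightarrow> y \<in> K \<Longrightarrow> x / y \<in> K"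
  by (simp add: divide_inverse)

lemma power_mem [simp]: "x \<in> K \<Longrightarrow> x ^ n \<in> K"
  by (induction n) simp_all

lemma of_nat_mem [simp]: "of_nat n \<in> K"
  by (induction n) simp_all

lemma numeral_mem [simp]: "numeral n \<in> K"
  by (metis of_nat_mem of_nat_numeral)

lemma of_int_mem [simp]: "of_int m \<in> K"
  by (cases m rule: int_cases2) simp_all

lemma of_rat_mem [simp]: "of_rat q \<in> K"
  by (cases q) (simp add: Fract_of_int_quotient of_rat_divide)

lemma emb_one [simp]: "\<sigma> 1 = 1"
  and emb_add [simp]: "x \<in> K \<Longrightarrow> y \<in> K \<Longrightarrow> \<sigma> (x + y) = \<sigma> x + \<sigma> y"
  and emb_mult [simp]: "x \<in> K \<Longrightarrow> y \<in> K \<Longrightarrow> \<sigma> (x * y) = \<sigma> x * \<sigma> y"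
  using embedding unfolding field_embedding_def by auto

lemma emb_zero [simp]: "\<sigma> 0 = 0"
  using emb_add[of 0 0] by simp

lemma emb_uminus [simp]: "x \<in> K \<Longrightarrow> \<sigma> (- x) = - \<sigma> x"
  by (metis emb_add emb_zero minus_unique right_minus uminus_mem)

lemma emb_diff [simp]: "x \<in> K \<Longrightarrow> y \<in> K \<Longrightarrow> \<sigma> (x - y) = \<sigma> x - \<sigma> y"
  by (simp add: diff_conv_add_uminus del: add_uminus_conv_diff)

lemma emb_power [simp]: "x \<in> K \<Longrightarrow> \<sigma> (x ^ n) = \<sigma> x ^ n"
  by (induction n) simp_all

lemma emb_inverse [simp]: "x \<in> K \<Longrightarrow> \<sigma> (inverse x) = inverse (\<sigma> x)"
proof (cases "x = 0")
  case False
  assume "x \<in> K"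
  then have "\<sigma> x * \<sigma> (inverse x) = 1"
    using False by (simp flip: emb_mult)
  then show ?thesis by (simp add: inverse_unique)
qed simp

lemma emb_divide [simp]: "x \<in> K \<Longrightarrow> y \<in> K \<Longrightarrow> \<sigma> (x / y) = \<sigma> x / \<sigma> y"
  by (simp add: divide_inverse)

lemma emb_of_nat [simp]: "\<sigma> (of_nat n) = of_nat n"
  by (induction n) simp_all

lemma emb_of_int [simp]: "\<sigma> (of_int m) = of_int m"
  by (cases m rule: int_cases2) simp_all

lemma emb_of_rat [simp]: "\<sigma> (of_rat q) = of_rat q"
  by (cases q) (simp add: Fract_of_int_quotient of_rat_divide)

lemma emb_eq_0_iff [simp]: "x \<in> K \<Longrightarrow> \<sigma> x = 0 \<longleftrightarrow> x = 0"
  using emb_inverse[of x] emb_mult[of x "inverse x"] by (cases "x = 0") auto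

lemma algebraic_int_emb:
  assumes "x \<in> K" "algebraic_int x"
  shows "algebraic_int (\<sigma> x)"
proof -
  have "poly (map_poly of_int p) x \<in> K \<and>
      \<sigma> (poly (map_poly of_int p) x) = poly (map_poly of_int p) (\<sigma> x)" for p :: "int poly"
    by (induction p rule: pCons_induct) (use \<open>x \<in> K\<close> in \<open>simp_all add: map_poly_pCons\<close>)
  then show ?thesis
    using assms(2) unfolding algebraic_int_altdef_ipoly by (metis emb_zero)
qed

end

section \<open>\<open>\<complex>\<close> as a vector space over \<open>\<rat>\<close>\<close>

definition rat_scale :: "rat \<Rightarrow> complex \<Rightarrow> complex" where
  "rat_scale q z = of_rat q * z"

interpretation rat_vs: vector_space rat_scale
  by unfold_locales (auto simp: rat_scale_def algebra_simps of_rat_add of_rat_mult)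

lemma rat_vs_span_insert:
  "rat_vs.span (insert a S) = {x. \<exists>k. x - of_rat k * a \<in> rat_vs.span S}"
  by (simp only: rat_vs.span_insert rat_scale_def)

lemma number_field_subset_span:
  assumes "number_field_of_degree L n"
  obtains B where "finite B" "card B \<le> n" "L \<subseteq> rat_vs.span B"
proof -
  obtain bs where bs: "length bs = n" "rat_span bs = L"
    using assms unfolding number_field_of_degree_def by blast
  have "L \<subseteq> rat_vs.span (set bs)"
  proof
    fix x assume "x \<in> L"
    then obtain c where x: "x = (\<Sum>i<length bs. rat_scale (c i) (bs ! i))"
      using bs(2) unfolding rat_span_def rat_scale_def by blast
    show "x \<in> rat_vs.span (set bs)"
      unfolding x by (intro rat_vs.span_sum rat_vs.span_scale rat_vs.span_base) auto
  qed
  then show ?thesis using that bs(1) card_length[of bs] by blast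
qed

lemma number_field_subset_span_independent:
  assumes "number_field_of_degree L n" "T \<subseteq> L" "finite T" "rat_vs.independent T" "card T = n"
  shows "L \<subseteq> rat_vs.span T"
proof
  fix x assume "x \<in> L"
  obtain B where B: "finite B" "card B \<le> n" "L \<subseteq> rat_vs.span B"
    using number_field_subset_span[OF assms(1)] by blast
  show "x \<in> rat_vs.span T"
  proof (rule ccontr)
    assume x: "x \<notin> rat_vs.span T"
    then have "x \<notin> T"
      using rat_vs.span_base by blast
    then have "card (insert x T) = Suc n"
      using assms(3,5) by simp
    moreover have "card (insert x T) \<le> card B"
      using rat_vs.independent_span_bound[OF B(1) rat_vs.independent_insertI[OF x assms(4)]]
        assms(2) \<open>x \<in> L\<close> B(3) by blast
    ultimately show False using B(2) by simp
  qed
qed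

lemma of_rat_in_Reals [simp]: "(of_rat q :: complex) \<in> \<real>"
  by (cases q) (simp add: Fract_of_int_quotient of_rat_divide)

lemma cnj_eq_uminus_if_square_real:
  assumes "w \<notin> \<real>" "w\<^sup>2 \<in> \<real>"
  shows "cnj w = - w"
proof -
  have "Im w \<noteq> 0" "Im (w\<^sup>2) = 0"
    using assms by (simp_all add: complex_is_Real_iff)
  then have "Re w = 0"
    by (simp add: power2_eq_square)
  then show ?thesis by (simp add: complex_eq_iff)
qed

section \<open>The quartic setting\<close>

locale quartic_cm_embedding = complex_subfield_embedding +
  fixes r :: complex
  assumes degree_4: "number_field_of_degree K 4"
    and totally_imaginary: "totally_imaginary K"
    and real_subfield_degree_2: "number_field_of_degree (K \<inter> \<real>) 2"
    and emb_real_subfield: "\<sigma> ` (K \<inter> \<real>) = K \<inter> \<real>"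
    and r_mem: "r \<in> K \<inter> \<real>" and emb_r_neq: "\<sigma> r \<noteq> r"
begin

lemma r_in_K [simp]: "r \<in> K" and r_real [simp]: "r \<in> \<real>"
  using r_mem by auto

lemma emb_real: "x \<in> K \<Longrightarrow> x \<in> \<real> \<Longrightarrow> \<sigma> x \<in> \<real>"
  using emb_real_subfield by blast

lemma r_not_rat: "r \<noteq> of_rat q"
  using emb_r_neq by auto

lemma rat_combination_real [simp]: "of_rat a + of_rat b * r \<in> \<real>"
  by (simp add: Reals_add Reals_mult)

lemma span_1: "rat_vs.span {1} = {x. \<exists>a. x = of_rat a}"
  by (auto simp: rat_vs_span_insert)

lemma span_1_r: "rat_vs.span {r, 1} = {x. \<exists>a b. x = of_rat a + of_rat b * r}"
  by (auto simp: rat_vs_span_insert algebra_simps)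

lemma independent_1_r: "rat_vs.independent {r, 1}"
proof (rule rat_vs.independent_insertI)
  show "r \<notin> rat_vs.span {1}"
    using r_not_rat by (auto simp: span_1)
  show "rat_vs.independent {1::complex}"
    by (rule rat_vs.independent_insertI) (auto simp: rat_vs.independent_empty)
qed

lemma real_subfield_rat_combination:
  assumes "x \<in> K \<inter> \<real>"
  obtains a b where "x = of_rat a + of_rat b * r"
proof -
  have "card {r, 1} = 2"
    using r_not_rat[of 1] by simp
  then have "K \<inter> \<real> \<subseteq> rat_vs.span {r, 1}"
    by (intro number_field_subset_span_independent[OF real_subfield_degree_2 _ _ independent_1_r])
      auto
  then show ?thesis using assms that by (auto simp: span_1_r)
qed

text \<open>The relative trace and norm of \<open>r\<close> are rational: \<open>\<sigma> r\<close> is the other root of the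
  rational quadratic satisfied by \<open>r\<close>.\<close>

lemma trace_norm_r_rat: "r + \<sigma> r \<in> \<rat>" "r * \<sigma> r \<in> \<rat>"
proof -
  have "r\<^sup>2 \<in> K \<inter> \<real>"
    by (simp add: Reals_power)
  then obtain \<alpha> \<beta> where r2: "r\<^sup>2 = of_rat \<alpha> + of_rat \<beta> * r"
    by (rule real_subfield_rat_combination)
  from arg_cong[of _ _ \<sigma>, OF r2] have "\<sigma> r ^ 2 = of_rat \<alpha> + of_rat \<beta> * \<sigma> r"
    by simp
  with r2 have "(r - \<sigma> r) * (r + \<sigma> r - of_rat \<beta>) = 0"
    by (simp add: algebra_simps power2_eq_square)
  then have trace: "r + \<sigma> r = of_rat \<beta>"
    using emb_r_neq by simp
  then show "r + \<sigma> r \<in> \<rat>" by simp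
  have "r * \<sigma> r = r * (of_rat \<beta> - r)"
    using trace by (simp add: eq_diff_eq add.commute)
  also have "\<dots> = of_rat \<beta> * r - r\<^sup>2"
    by (simp add: algebra_simps power2_eq_square)
  also have "\<dots> = - of_rat \<alpha>"
    by (simp add: r2)
  finally show "r * \<sigma> r \<in> \<rat>" by simp
qed

lemma real_subfield_norm_rat:
  assumes "x \<in> K \<inter> \<real>"
  shows "x * \<sigma> x \<in> \<rat>"
proof -
  obtain a b where x: "x = of_rat a + of_rat b * r"
    using real_subfield_rat_combination[OF assms] .
  obtain t n where tn: "r + \<sigma> r = of_rat t" "r * \<sigma> r = of_rat n"
    using trace_norm_r_rat by (auto elim!: Rats_cases)
  have "x * \<sigma> x = of_rat a ^ 2 + of_rat a * of_rat b * (r + \<sigma> r) + of_rat b ^ 2 * (r * \<sigma> r)"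
    using x by (simp add: algebra_simps power2_eq_square)
  also have "\<dots> = of_rat (a\<^sup>2 + a * b * t + b\<^sup>2 * n)"
    by (simp add: tn of_rat_add of_rat_mult of_rat_power)
  finally show ?thesis by simp
qed

lemma field_decomposition:
  assumes "w \<in> K" "w \<notin> \<real>" "y \<in> K"
  obtains u v where "u \<in> K \<inter> \<real>" "v \<in> K \<inter> \<real>" "y = u + v * w"
proof -
  let ?B = "{r * w, w, r, 1}"
  have w_not_span: "w \<notin> rat_vs.span {r, 1}"
    using assms(2) by (auto simp: span_1_r)
  have rw_not_span: "r * w \<notin> rat_vs.span {w, r, 1}"
  proof
    assume "r * w \<in> rat_vs.span {w, r, 1}"
    then obtain k a b where "(r - of_rat k) * w = of_rat a + of_rat b * r"
      by (auto simp: rat_vs_span_insert span_1_r algebra_simps)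
    moreover have "r - of_rat k \<noteq> 0" using r_not_rat[of k] by simp
    ultimately have "w = (of_rat a + of_rat b * r) / (r - of_rat k)"
      by (simp add: field_simps)
    then show False using assms(2) by (simp add: Reals_divide Reals_diff)
  qed
  have B_subset: "?B \<subseteq> K"
    using assms(1) by simp
  have B_independent: "rat_vs.independent ?B"
    by (intro rat_vs.independent_insertI w_not_span rw_not_span independent_1_r)
  have B_card: "card ?B = 4"
  proof -
    have "w \<notin> {r, 1}" "r * w \<notin> {w, r, 1}"
      using w_not_span rw_not_span by (meson rat_vs.span_base)+
    then show ?thesis using r_not_rat[of 1] by simp
  qed
  have "K \<subseteq> rat_vs.span ?B"
    using number_field_subset_span_independent[OF degree_4 B_subset _ B_independent B_card] by simp
  then obtain a b c d where "y = (of_rat a + of_rat b * r) + (of_rat c + of_rat d * r) * w"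
    using assms(3) by (auto simp: rat_vs_span_insert span_1_r algebra_simps)
  then show ?thesis by (intro that) auto
qed

lemma exists_purely_imaginary: "\<exists>\<phi>\<in>K. \<phi> \<notin> \<real> \<and> \<phi>\<^sup>2 \<in> \<real>"
proof -
  have "field_embedding K id" by (simp add: field_embedding_def)
  then obtain \<theta> where \<theta>: "\<theta> \<in> K" "\<theta> \<notin> \<real>"
    using totally_imaginary unfolding totally_imaginary_def by auto
  obtain a b where ab: "a \<in> K \<inter> \<real>" "b \<in> K \<inter> \<real>" "\<theta>\<^sup>2 = a + b * \<theta>"
    using field_decomposition[OF \<theta> power_mem[OF \<theta>(1), of 2]] .
  define \<phi> where "\<phi> = 2 * \<theta> - b"
  have "\<phi> \<in> K" using \<theta> ab by (simp add: \<phi>_def)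
  moreover have "\<phi> \<notin> \<real>"
  proof
    assume "\<phi> \<in> \<real>"
    then have "(\<phi> + b) / 2 \<in> \<real>" using ab by (simp add: Reals_add Reals_divide)
    then show False using \<theta> by (simp add: \<phi>_def)
  qed
  moreover have "\<phi>\<^sup>2 \<in> \<real>"
  proof -
    have "\<phi>\<^sup>2 = 4 * \<theta>\<^sup>2 - 4 * b * \<theta> + b\<^sup>2"
      by (simp add: \<phi>_def power2_eq_square algebra_simps)
    also have "\<dots> = 4 * a + b\<^sup>2"
      unfolding ab(3) by (simp add: algebra_simps)
    finally show ?thesis
      using ab by (simp add: Reals_add Reals_mult Reals_power)
  qed
  ultimately show ?thesis by blast
qed

text \<open>If \<open>\<sigma> \<phi>\<close> were real, \<open>\<sigma>\<close> would map \<open>K = K\<^sub>0 + K\<^sub>0 \<phi>\<close> into \<open>\<real>\<close>.\<close>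

lemma emb_not_real:
  assumes "\<phi> \<in> K" "\<phi> \<notin> \<real>"
  shows "\<sigma> \<phi> \<notin> \<real>"
proof
  assume "\<sigma> \<phi> \<in> \<real>"
  obtain y where y: "y \<in> K" "\<sigma> y \<notin> \<real>"
    using totally_imaginary embedding unfolding totally_imaginary_def by blast
  obtain u v where uv: "u \<in> K \<inter> \<real>" "v \<in> K \<inter> \<real>" "y = u + v * \<phi>"
    using field_decomposition[OF assms y(1)] .
  have "\<sigma> u \<in> \<real>" "\<sigma> v \<in> \<real>"
    using uv emb_real by auto
  then have "\<sigma> y \<in> \<real>"
    using \<open>\<sigma> \<phi> \<in> \<real>\<close> uv assms(1) by (simp add: Reals_add Reals_mult)
  with y(2) show False ..
qed

lemma cnj_mem_emb_cnj:
  assumes "z \<in> K"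
  shows "cnj z \<in> K" "\<sigma> (cnj z) = cnj (\<sigma> z)"
proof -
  obtain \<phi> where \<phi>: "\<phi> \<in> K" "\<phi> \<notin> \<real>" "\<phi>\<^sup>2 \<in> \<real>"
    using exists_purely_imaginary by auto
  have cnj_\<phi>: "cnj \<phi> = - \<phi>"
    using cnj_eq_uminus_if_square_real \<phi>(2,3) .
  have "\<sigma> \<phi> ^ 2 \<in> \<real>"
    using emb_real[of "\<phi>\<^sup>2"] \<phi> by simp
  then have cnj_\<sigma>\<phi>: "cnj (\<sigma> \<phi>) = - \<sigma> \<phi>"
    using cnj_eq_uminus_if_square_real emb_not_real \<phi>(1,2) by blast
  obtain u v where uv: "u \<in> K \<inter> \<real>" "v \<in> K \<inter> \<real>" "z = u + v * \<phi>"
    using field_decomposition[OF \<phi>(1,2) assms] .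
  have "cnj u = u" "cnj v = v" "cnj (\<sigma> u) = \<sigma> u" "cnj (\<sigma> v) = \<sigma> v"
    using uv emb_real by (auto simp: Reals_cnj_iff)
  then have cnj_z: "cnj z = u - v * \<phi>"
    using uv(3) cnj_\<phi> by simp
  then show "cnj z \<in> K"
    using uv \<phi>(1) by simp
  have "\<sigma> (cnj z) = \<sigma> u - \<sigma> v * \<sigma> \<phi>"
    unfolding cnj_z using uv \<phi>(1) by simp
  moreover have "\<sigma> z = \<sigma> u + \<sigma> v * \<sigma> \<phi>"
    unfolding uv(3) using uv \<phi>(1) by simp
  ultimately show "\<sigma> (cnj z) = cnj (\<sigma> z)"
    using \<open>cnj (\<sigma> u) = \<sigma> u\<close> \<open>cnj (\<sigma> v) = \<sigma> v\<close> cnj_\<sigma>\<phi> by simp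
qed

lemma norm_product_rat:
  assumes "z \<in> K"
  shows "z * cnj z * (\<sigma> z * cnj (\<sigma> z)) \<in> \<rat>"
proof -
  have "z * cnj z \<in> K"
    using assms cnj_mem_emb_cnj(1)[OF assms] by (rule mult_mem)
  moreover have "z * cnj z \<in> \<real>"
    unfolding complex_mult_cnj by simp
  moreover have "\<sigma> (z * cnj z) = \<sigma> z * cnj (\<sigma> z)"
    using assms cnj_mem_emb_cnj by simp
  ultimately show ?thesis
    using real_subfield_norm_rat[of "z * cnj z"] by simp
qed

lemma norm_product_ge_one:
  assumes "z \<in> K" "algebraic_int z" "z \<noteq> 0"
  shows "1 \<le> cmod z * cmod (\<sigma> z)"
proof -
  define N where "N = z * cnj z * (\<sigma> z * cnj (\<sigma> z))"
  have "algebraic_int (\<sigma> z)"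
    using algebraic_int_emb assms(1,2) .
  then have "algebraic_int N"
    unfolding N_def using assms(2) by (simp add: algebraic_int_diff_mult(2))
  then have "N \<in> \<int>"
    using rational_algebraic_int_is_int norm_product_rat[OF assms(1)] by (simp add: N_def)
  then obtain m where "N = of_int m"
    by (auto elim: Ints_cases)
  moreover have "N = of_real ((cmod z * cmod (\<sigma> z))\<^sup>2)"
    unfolding N_def by (simp add: complex_norm_square[symmetric] power_mult_distrib)
  ultimately have "(cmod z * cmod (\<sigma> z))\<^sup>2 = of_int m"
    by (metis of_real_eq_iff of_real_of_int_eq)
  moreover have "(cmod z * cmod (\<sigma> z))\<^sup>2 > 0"
    using assms by simp
  ultimately have "1 \<le> (cmod z * cmod (\<sigma> z))\<^sup>2" by simp
  then show ?thesis
    using power2_le_imp_le[of 1 "cmod z * cmod (\<sigma> z)"] by simp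
qed

end

theorem mainTheorem2:
  fixes K :: "complex set" and \<sigma> :: "complex \<Rightarrow> complex" and B :: "complex set"
    and z1 z2 :: complex
  assumes "number_field_of_degree K 4"
    and "totally_imaginary K"
    and "number_field_of_degree (K \<inter> \<real>) 2"
    and "field_embedding K \<sigma>"
    and "\<sigma> ` (K \<inter> \<real>) = K \<inter> \<real>"
    and "\<exists>x\<in>K \<inter> \<real>. \<sigma> x \<noteq> x"
    and "bounded B" and "0 \<in> interior B"
    and "z1 \<in> {z \<in> ring_of_integers K. \<sigma> z \<in> B}"
    and "z2 \<in> {z \<in> ring_of_integers K. \<sigma> z \<in> B}"
    and "z1 \<noteq> z2"
  shows "cmod (z1 - z2) \<ge> 1 / (2 * diameter B)"
proof -
  obtain r where "r \<in> K \<inter> \<real>" "\<sigma> r \<noteq> r" using assms(6) by blast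
  then interpret quartic_cm_embedding K \<sigma> r
    using assms(1-5) by unfold_locales (auto simp: number_field_of_degree_def)
  have z: "z1 \<in> K" "z2 \<in> K" "algebraic_int z1" "algebraic_int z2" "\<sigma> z1 \<in> B" "\<sigma> z2 \<in> B"
    using assms(9,10) by (auto simp: ring_of_integers_def algebraic_integer_iff_algebraic_int)
  have "1 \<le> cmod (z1 - z2) * cmod (\<sigma> (z1 - z2))"
    using z assms(11) by (intro norm_product_ge_one algebraic_int_diff_mult(1)) auto
  also have "\<dots> \<le> cmod (z1 - z2) * diameter B"
    using diameter_bounded_bound[OF assms(7) z(5,6)] z by (simp add: dist_norm mult_left_mono)
  finally have "1 \<le> cmod (z1 - z2) * diameter B" .
  moreover have "diameter B > 0"
    using calculation diameter_ge_0[OF assms(7)] by (cases "diameter B = 0") auto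
  ultimately have "1 / diameter B \<le> cmod (z1 - z2)"
    by (simp add: field_simps)
  moreover have "1 / (2 * diameter B) \<le> 1 / diameter B"
    using \<open>diameter B > 0\<close> by (simp add: field_simps)
  ultimately show ?thesis by simp
qed

end
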